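(* Fix constants $\lambda_1,\ldots,\lambda_K\ge 0$ and $\Gamma^{\rm ST}_1,\ldots,\Gamma^{\rm ST}_M>0$. For a channel realization $\boldsymbol{\alpha}$ consider the problem $$\max_{p_1,\ldots,p_K}\ \log\Big(1+\sum_{k=1}^K h_kp_k\Big)-\sum_{k=1}^K\lambda_kp_k\quad\text{s.t.}\quad \sum_{k=1}^K g_{km}p_k\le\Gamma_m^{\rm ST}\ \ \forall m,\qquad p_k\ge 0\ \ \forall k.$$ Then, for almost every realization $\boldsymbol{\alpha}$, an optimal solution of this problem has at most $M+1$ indices $k$ with $p_k>0$.
   Context: $\boldsymbol{\alpha}=(h_1,\ldots,h_K,g_{11},\ldots,g_{KM})$ is a random vector of nonnegative channel power gains ($h_k$: secondary user $k$ to secondary base station; $g_{km}$: secondary user $k$ to primary receiver $m$, $m=1,\ldots,M$) with a continuous, differentiable joint cumulative distribution function, the $h_k$'s and $g_{km}$'s being independent. *)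

theory Defs
  imports "HOL-Probability.Probability"
begin

text \<open>A channel realization is a vector indexed by 'k + ('k \<times> 'm):
  component Inl k is h_k (SU k to secondary base station),
  component Inr (k,m) is g_km (SU k to primary receiver m).\<close>

definition feasible ::
  "real^'m \<Rightarrow> real^('k::finite + ('k \<times> 'm::finite)) \<Rightarrow> real^'k \<Rightarrow> bool" where
  "feasible \<Gamma> \<alpha> p \<longleftrightarrow>
     (\<forall>k. p $ k \<ge> 0) \<and>
     (\<forall>m. (\<Sum>k\<in>UNIV. \<alpha> $ Inr (k, m) * p $ k) \<le> \<Gamma> $ m)"

definition objective ::
  "real^'k \<Rightarrow> real^('k::finite + ('k \<times> 'm::finite)) \<Rightarrow> real^'k \<Rightarrow> real" where
  "objective lam \<alpha> p = ln (1 + (\<Sum>k\<in>UNIV. \<alpha> $ Inl k * p $ k)) - (\<Sum>k\<in>UNIV. lam $ k * p $ k)"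

definition optimal ::
  "real^'k \<Rightarrow> real^'m \<Rightarrow> real^('k::finite + ('k \<times> 'm::finite)) \<Rightarrow> real^'k \<Rightarrow> bool" where
  "optimal lam \<Gamma> \<alpha> p \<longleftrightarrow> feasible \<Gamma> \<alpha> p \<and>
     (\<forall>q. feasible \<Gamma> \<alpha> q \<longrightarrow> objective lam \<alpha> q \<le> objective lam \<alpha> p)"

end

theory Submission
  imports Defs
begin

text \<open>At an optimal power vector \<open>p\<close> with support \<open>T\<close>, moving along any direction \<open>d\<close> supported
  in \<open>T\<close> that leaves all interference sums unchanged keeps \<open>p\<close> feasible on both sides, so the
  directional derivative of the objective vanishes. Hence the vector \<open>h k / (1 + \<Sum>h p) - \<lambda> k\<close>, \<open>k \<in> T\<close>, is
  orthogonal to the common kernel of the \<open>M\<close> vectors \<open>g k m\<close>, \<open>k \<in> T\<close>, and therefore lies in their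
  span: \<open>h\<close> restricted to \<open>T\<close> is a combination of \<open>\<lambda>\<close> and these \<open>M\<close> vectors. For \<open>|T| \<ge> M + 2\<close> the
  channels with this property form the image of a hyperplane under a smooth map, a Lebesgue null
  set, which is also \<open>P\<close>-null by absolute continuity.\<close>

lemma in_span_if_orthogonal_to_annihilator:
  fixes w :: "'a::euclidean_space"
  assumes "\<And>d. (\<And>u. u \<in> U \<Longrightarrow> u \<bullet> d = 0) \<Longrightarrow> w \<bullet> d = 0"
  shows "w \<in> span U"
proof -
  have "w \<in> (span U)\<^sup>\<bottom>\<^sup>\<bottom>"
  proof (unfold orthogonal_comp_def, intro CollectI ballI)
    fix d assume "d \<in> {x. \<forall>y\<in>span U. orthogonal y x}"
    hence "u \<bullet> d = 0" if "u \<in> U" for u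
      using that span_base by (fastforce simp: orthogonal_def)
    thus "orthogonal d w" using assms by (simp add: orthogonal_def inner_commute)
  qed
  thus ?thesis by (simp add: orthogonal_comp_self)
qed

lemma span_with_axes_imp_combination_on:
  fixes v :: "'m::finite \<Rightarrow> real^'k::finite"
  assumes "w \<in> span (range v \<union> (\<lambda>k. axis k 1) ` (- T))"
  shows "\<exists>c. \<forall>k\<in>T. w $ k = (\<Sum>m\<in>UNIV. c m * v m $ k)"
  using assms
proof (induction rule: span_induct_alt)
  case base
  show ?case by (auto intro: exI[of _ "\<lambda>_. 0"])
next
  case (step a x y)
  then obtain c where c: "\<forall>k\<in>T. y $ k = (\<Sum>m\<in>UNIV. c m * v m $ k)" by blast
  from step.hyps(1) consider m0 where "x = v m0" | k0 where "k0 \<notin> T" "x = axis k0 1" by blast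
  then show ?case
  proof cases
    case 1
    show ?thesis
      by (rule exI[of _ "\<lambda>m. c m + (if m = m0 then a else 0)"])
        (simp add: 1 c distrib_right sum.distrib if_distrib[of "\<lambda>t. t * _"] cong: if_cong)
  next
    case 2
    then show ?thesis using c by (auto simp: axis_def)
  qed
qed

definition degenerate_channel :: "'k set \<Rightarrow> real^'k \<Rightarrow> (real^('k::finite + ('k \<times> 'm::finite))) set" where
  "degenerate_channel T lam =
     {\<alpha>. \<exists>a c. \<forall>k\<in>T. \<alpha> $ Inl k = a * lam $ k + (\<Sum>m\<in>UNIV. c m * \<alpha> $ Inr (k, m))}"

text \<open>The free parameters \<open>a\<close> and \<open>c m\<close> of a degenerate channel are read off the coordinates
  \<open>h k0\<close> and \<open>h (\<sigma> m)\<close>, which the map overwrites, and the map never reads \<open>h k1\<close>;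
  hence the degenerate channels are covered by the image of the hyperplane \<open>h k1 = 0\<close>.\<close>

definition degenerate_channel_param ::
  "'k set \<Rightarrow> real^'k \<Rightarrow> 'k \<Rightarrow> ('m \<Rightarrow> 'k)
     \<Rightarrow> real^('k::finite + ('k \<times> 'm::finite)) \<Rightarrow> real^('k + ('k \<times> 'm))" where
  "degenerate_channel_param T lam k0 \<sigma> x =
     (\<chi> i. case i of
        Inl k \<Rightarrow> if k \<in> T then x $ Inl k0 * lam $ k + (\<Sum>m\<in>UNIV. x $ Inl (\<sigma> m) * x $ Inr (k, m))
                 else x $ i
      | Inr _ \<Rightarrow> x $ i)"

lemma differentiable_degenerate_channel_param:
  fixes x :: "real^('k::finite + ('k \<times> 'm::finite))" and \<sigma> :: "'m \<Rightarrow> 'k"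
  shows "degenerate_channel_param T lam k0 \<sigma> differentiable (at x within S)"
proof (subst differentiable_componentwise_within, intro ballI)
  fix b :: "real^('k + ('k \<times> 'm))" assume "b \<in> Basis"
  then obtain i where b: "b = axis i 1" by (auto simp: Basis_vec_def)
  have coord: "(\<lambda>x::real^('k + ('k \<times> 'm)). x $ j) differentiable (at x within S)" for j
    by (rule bounded_linear_imp_differentiable) (rule bounded_linear_vec_nth)
  show "(\<lambda>x. degenerate_channel_param T lam k0 \<sigma> x \<bullet> b) differentiable (at x within S)"
    unfolding b inner_axis degenerate_channel_param_def
    by (cases i; cases "projl i \<in> T") (auto intro!: derivative_intros coord)
qed

lemma degenerate_channel_subset_param_image:
  fixes T :: "'k::finite set" and \<sigma> :: "'m::finite \<Rightarrow> 'k"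
  assumes k0: "k0 \<in> T" and k1: "k1 \<in> T" "k1 \<noteq> k0"
    and \<sigma>: "inj \<sigma>" "range \<sigma> \<subseteq> T - {k0, k1}"
  shows "degenerate_channel T lam
           \<subseteq> degenerate_channel_param T lam k0 \<sigma> ` {x. x $ Inl k1 = 0}"
proof
  fix \<alpha> :: "real^('k + ('k \<times> 'm))" assume "\<alpha> \<in> degenerate_channel T lam"
  then obtain a c where ac: "\<forall>k\<in>T. \<alpha> $ Inl k = a * lam $ k + (\<Sum>m\<in>UNIV. c m * \<alpha> $ Inr (k, m))"
    unfolding degenerate_channel_def by blast
  define x :: "real^('k + ('k \<times> 'm))" where
    "x = (\<chi> i. case i of
            Inl k \<Rightarrow> if k = k0 then a else if k \<in> range \<sigma> then c (inv \<sigma> k)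
                     else if k \<in> T then 0 else \<alpha> $ i
          | Inr _ \<Rightarrow> \<alpha> $ i)"
  have "k1 \<notin> range \<sigma>" "\<And>m. \<sigma> m \<noteq> k0" using \<sigma>(2) by auto
  with k1 have "x $ Inl k1 = 0" by (simp add: x_def)
  moreover have "degenerate_channel_param T lam k0 \<sigma> x = \<alpha>"
  proof (subst vec_eq_iff, intro allI)
    fix i show "degenerate_channel_param T lam k0 \<sigma> x $ i = \<alpha> $ i"
    proof (cases i)
      case (Inl k)
      with k0 show ?thesis
        using ac \<sigma> \<open>\<And>m. \<sigma> m \<noteq> k0\<close> by (cases "k \<in> T") (auto simp: degenerate_channel_param_def x_def)
    qed (simp add: degenerate_channel_param_def x_def)
  qed
  ultimately show "\<alpha> \<in> degenerate_channel_param T lam k0 \<sigma> ` {x. x $ Inl k1 = 0}" by blast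
qed

lemma negligible_degenerate_channel:
  fixes T :: "'k::finite set"
  assumes "CARD('m::finite) + 1 < card T"
  shows "negligible (degenerate_channel T lam :: (real^('k + ('k \<times> 'm))) set)"
proof -
  have "\<not> card T \<le> Suc 0" using assms by linarith
  then obtain k0 k1 where k01: "k0 \<in> T" "k1 \<in> T" "k0 \<noteq> k1"
    using card_le_Suc0_iff_eq[of T] by auto
  have "CARD('m) \<le> card (T - {k0, k1})" using assms k01 by (simp add: card_Diff_subset)
  then obtain \<sigma> :: "'m \<Rightarrow> 'k" where \<sigma>: "inj \<sigma>" "range \<sigma> \<subseteq> T - {k0, k1}"
    using card_le_inj[of "UNIV::'m set" "T - {k0, k1}"] by auto
  have "negligible {x :: real^('k + ('k \<times> 'm)). x $ Inl k1 = 0}"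
    using negligible_hyperplane[of "axis (Inl k1) (1::real)" 0] by (simp add: inner_axis' axis_eq_0_iff)
  then have "negligible (degenerate_channel_param T lam k0 \<sigma> ` {x. x $ Inl k1 = 0})"
    by (intro negligible_differentiable_image_negligible)
      (auto simp: differentiable_on_def differentiable_degenerate_channel_param)
  then show ?thesis
    using negligible_subset degenerate_channel_subset_param_image[OF k01(1,2) k01(3)[symmetric] \<sigma>] by blast
qed

lemma optimal_first_order_condition:
  fixes lam :: "real^'k::finite" and \<Gamma> :: "real^'m::finite" and \<alpha> :: "real^('k + ('k \<times> 'm))"
  assumes opt: "optimal lam \<Gamma> \<alpha> p"
    and \<alpha>_nonneg: "\<forall>i. \<alpha> $ i \<ge> 0"
    and d_support: "\<forall>k. p $ k = 0 \<longrightarrow> d $ k = 0"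
    and d_null: "\<forall>m. (\<Sum>k\<in>UNIV. \<alpha> $ Inr (k, m) * d $ k) = 0"
  shows "(\<Sum>k\<in>UNIV. \<alpha> $ Inl k * d $ k) / (1 + (\<Sum>k\<in>UNIV. \<alpha> $ Inl k * p $ k))
           = (\<Sum>k\<in>UNIV. lam $ k * d $ k)"
proof -
  define A where "A = (\<Sum>k\<in>UNIV. \<alpha> $ Inl k * p $ k)"
  define B where "B = (\<Sum>k\<in>UNIV. \<alpha> $ Inl k * d $ k)"
  define C where "C = (\<Sum>k\<in>UNIV. lam $ k * p $ k)"
  define D where "D = (\<Sum>k\<in>UNIV. lam $ k * d $ k)"
  define f where "f e = ln (1 + (A + e * B)) - (C + e * D)" for e :: real
  have feas: "feasible \<Gamma> \<alpha> p"
    and max: "\<And>q. feasible \<Gamma> \<alpha> q \<Longrightarrow> objective lam \<alpha> q \<le> objective lam \<alpha> p"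
    using opt unfolding optimal_def by auto
  have p_nonneg: "\<forall>k. p $ k \<ge> 0" using feas unfolding feasible_def by auto
  have "A \<ge> 0" unfolding A_def using \<alpha>_nonneg p_nonneg by (auto intro!: sum_nonneg)
  have objective_on_line: "objective lam \<alpha> (p + e *\<^sub>R d) = f e" for e
    unfolding objective_def f_def A_def B_def C_def D_def
    by (simp add: algebra_simps sum.distrib sum_distrib_left)
  have feasible_on_line: "feasible \<Gamma> \<alpha> (p + e *\<^sub>R d)" if "\<forall>k. 0 \<le> p $ k + e * d $ k" for e
  proof -
    have "(\<Sum>k\<in>UNIV. \<alpha> $ Inr (k, m) * (p + e *\<^sub>R d) $ k) = (\<Sum>k\<in>UNIV. \<alpha> $ Inr (k, m) * p $ k)" for m
      using d_null by (simp add: algebra_simps sum.distrib sum_distrib_left[symmetric])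
    then show ?thesis using that feas unfolding feasible_def by simp
  qed
  have "eventually (\<lambda>e. \<forall>k. 0 \<le> p $ k + e * d $ k) (nhds (0::real))"
  proof (rule eventually_all_finite)
    fix k
    show "eventually (\<lambda>e. 0 \<le> p $ k + e * d $ k) (nhds (0::real))"
    proof (cases "p $ k = 0")
      case False
      have "((\<lambda>e. p $ k + e * d $ k) \<longlongrightarrow> p $ k + 0 * d $ k) (nhds (0::real))"
        by (intro tendsto_intros) (simp add: filterlim_ident)
      moreover have "p $ k > 0" using False p_nonneg by (simp add: order_neq_le_trans)
      ultimately have "eventually (\<lambda>e. 0 < p $ k + e * d $ k) (nhds (0::real))"
        by (auto dest: order_tendstoD(1))
      then show ?thesis by eventually_elim simp
    qed (use d_support in simp)
  qed
  then obtain r where "r > 0" and r: "\<And>e. \<bar>e\<bar> < r \<Longrightarrow> \<forall>k. 0 \<le> p $ k + e * d $ k"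
    unfolding eventually_nhds_metric dist_real_def by auto
  have local_max: "\<forall>e. \<bar>0 - e\<bar> < r \<longrightarrow> f e \<le> f 0"
    using max[OF feasible_on_line[OF r]] objective_on_line[of 0] by (simp add: objective_on_line)
  have "DERIV f 0 :> B / (1 + A) - D"
    unfolding f_def using \<open>A \<ge> 0\<close> by (auto intro!: derivative_eq_intros)
  from DERIV_local_max[OF this \<open>r > 0\<close> local_max] show ?thesis
    unfolding A_def B_def D_def by simp
qed

lemma optimal_imp_degenerate_channel:
  fixes lam :: "real^'k::finite" and \<Gamma> :: "real^'m::finite" and \<alpha> :: "real^('k + ('k \<times> 'm))"
  assumes opt: "optimal lam \<Gamma> \<alpha> p" and \<alpha>_nonneg: "\<forall>i. \<alpha> $ i \<ge> 0"
  shows "\<alpha> \<in> degenerate_channel {k. p $ k > 0} lam"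
proof -
  define T where "T = {k. p $ k > 0}"
  define A where "A = (\<Sum>k\<in>UNIV. \<alpha> $ Inl k * p $ k)"
  define w :: "real^'k" where "w = (\<chi> k. \<alpha> $ Inl k / (1 + A) - lam $ k)"
  define v :: "'m \<Rightarrow> real^'k" where "v m = (\<chi> k. if k \<in> T then \<alpha> $ Inr (k, m) else 0)" for m
  have p_nonneg: "\<forall>k. p $ k \<ge> 0" using opt unfolding optimal_def feasible_def by auto
  have "A \<ge> 0" unfolding A_def using \<alpha>_nonneg p_nonneg by (auto intro!: sum_nonneg)
  have not_in_T: "k \<notin> T \<longleftrightarrow> p $ k = 0" for k
    using p_nonneg[rule_format, of k] by (auto simp: T_def)
  have "w \<in> span (range v \<union> (\<lambda>k. axis k 1) ` (- T))"
  proof (rule in_span_if_orthogonal_to_annihilator)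
    fix d assume orth: "\<And>u. u \<in> range v \<union> (\<lambda>k. axis k 1) ` (- T) \<Longrightarrow> u \<bullet> d = 0"
    have d_support: "\<forall>k. p $ k = 0 \<longrightarrow> d $ k = 0"
      using orth[of "axis _ 1"] by (auto simp: not_in_T inner_axis')
    have "v m \<bullet> d = (\<Sum>k\<in>UNIV. \<alpha> $ Inr (k, m) * d $ k)" for m
      unfolding v_def inner_vec_def using d_support not_in_T by (intro sum.cong) auto
    then have "\<forall>m. (\<Sum>k\<in>UNIV. \<alpha> $ Inr (k, m) * d $ k) = 0" using orth by auto
    from optimal_first_order_condition[OF opt \<alpha>_nonneg d_support this]
    show "w \<bullet> d = 0"
      unfolding w_def inner_vec_def A_def
      by (simp add: algebra_simps sum_subtractf sum_divide_distrib)
  qed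
  then obtain c where c: "\<forall>k\<in>T. w $ k = (\<Sum>m\<in>UNIV. c m * v m $ k)"
    using span_with_axes_imp_combination_on by blast
  have "\<alpha> $ Inl k = (1 + A) * lam $ k + (\<Sum>m\<in>UNIV. ((1 + A) * c m) * \<alpha> $ Inr (k, m))" if "k \<in> T" for k
  proof -
    have "\<alpha> $ Inl k / (1 + A) - lam $ k = (\<Sum>m\<in>UNIV. c m * \<alpha> $ Inr (k, m))"
      using c that by (simp add: w_def v_def)
    then show ?thesis
      using \<open>A \<ge> 0\<close> by (simp add: field_simps sum_distrib_left mult.assoc)
  qed
  then show ?thesis
    unfolding degenerate_channel_def T_def
    by (auto intro!: exI[of _ "1 + A"] exI[of _ "\<lambda>m. (1 + A) * c m"])
qed

lemma AE_not_in_negligible: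
  fixes P :: "'a::euclidean_space measure"
  assumes "sets P = sets borel" "absolutely_continuous lborel P" "negligible N"
  shows "AE x in P. x \<notin> N"
proof -
  have "AE x in lebesgue. x \<notin> N"
    using assms(3) by (simp add: negligible_iff_null_sets AE_not_in)
  then have "AE x in lborel. x \<notin> N"
    by (simp add: AE_completion_iff)
  then obtain N' where "{x \<in> space lborel. \<not> x \<notin> N} \<subseteq> N'" "emeasure lborel N' = 0"
      "N' \<in> sets lborel"
    by (rule AE_E)
  then have "N \<subseteq> N'" "N' \<in> null_sets lborel" by (auto intro: null_setsI)
  then have "N' \<in> null_sets P" using assms(2) unfolding absolutely_continuous_def by blast
  then show ?thesis
    using \<open>N \<subseteq> N'\<close> sets_eq_imp_space_eq[OF assms(1)] by (intro AE_I') auto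
qed

theorem lemma3p3:
  fixes lam :: "real^'k::finite"
    and \<Gamma> :: "real^'m::finite"
    and P :: "(real^('k + ('k \<times> 'm))) measure"
  assumes lam_nonneg: "\<forall>k. lam $ k \<ge> 0"
    and \<Gamma>_pos: "\<forall>m. \<Gamma> $ m > 0"
    and prob: "prob_space P"
    and sets_P: "sets P = sets borel"
    and density: "absolutely_continuous lborel P"
    and indep: "prob_space.indep_vars P (\<lambda>_. borel) (\<lambda>i \<alpha>. \<alpha> $ i) UNIV"
    and nonneg: "AE \<alpha> in P. \<forall>i. \<alpha> $ i \<ge> 0"
  shows "AE \<alpha> in P. \<forall>p. optimal lam \<Gamma> \<alpha> p \<longrightarrow>
           card {k. p $ k > 0} \<le> CARD('m) + 1"
proof -
  let ?degenerate = "\<Union>T\<in>{T. CARD('m) + 1 < card T}.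
    (degenerate_channel T lam :: (real^('k + ('k \<times> 'm))) set)"
  have "negligible ?degenerate"
    by (rule negligible_Union) (auto intro: negligible_degenerate_channel)
  then have "AE \<alpha> in P. \<alpha> \<notin> ?degenerate"
    using sets_P density by (rule AE_not_in_negligible[rotated 2])
  with nonneg show ?thesis
    by eventually_elim (use optimal_imp_degenerate_channel in \<open>fastforce simp: not_less\<close>)
qed

end
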